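(* A binary matrix $A$ has at most one base that spans all other bases of $A$, both with respect to the binary setting and with respect to the boolean setting.
   Context: A set $X$ of $\{0,1\}$-vectors spans a vector $y$ in the binary (resp. boolean) sense if $y=\sum_{x\in X}c_xx$ with $c_x\in\{0,1\}$ using ordinary (resp. boolean, $1+1=1$) addition; $X$ spans a set $Y$ if it spans each vector of $Y$. A binary (resp. boolean) base of an $n\times m$ binary matrix $A$ is a set of $\{0,1\}$ column vectors of length $n$ spanning every column of $A$ in the corresponding sense, of minimum cardinality among such spanning sets. *)

theory Defs
  imports Main
begin

definition binvecs :: "nat \<Rightarrow> (nat \<Rightarrow> nat) set" where
  "binvecs n = {v. (\<forall>i<n. v i \<in> {0,1}) \<and> (\<forall>i\<ge>n. v i = 0)}"

(* binary span: y = sum of a subset of X, ordinary (integer) addition *)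
definition bin_spans_vec :: "nat \<Rightarrow> (nat \<Rightarrow> nat) set \<Rightarrow> (nat \<Rightarrow> nat) \<Rightarrow> bool" where
  "bin_spans_vec n X y \<longleftrightarrow> (\<exists>C\<subseteq>X. \<forall>i<n. y i = (\<Sum>x\<in>C. x i))"

definition bool_spans_vec :: "nat \<Rightarrow> (nat \<Rightarrow> nat) set \<Rightarrow> (nat \<Rightarrow> nat) \<Rightarrow> bool" where
  "bool_spans_vec n X y \<longleftrightarrow>
     (\<exists>C\<subseteq>X. \<forall>i<n. y i = (if \<exists>x\<in>C. x i = 1 then 1 else 0))"

definition spans_set ::
  "(nat \<Rightarrow> (nat \<Rightarrow> nat) set \<Rightarrow> (nat \<Rightarrow> nat) \<Rightarrow> bool) \<Rightarrow> nat \<Rightarrow>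
   (nat \<Rightarrow> nat) set \<Rightarrow> (nat \<Rightarrow> nat) set \<Rightarrow> bool" where
  "spans_set sp n X Y \<longleftrightarrow> (\<forall>y\<in>Y. sp n X y)"

definition col :: "nat \<Rightarrow> (nat \<Rightarrow> nat \<Rightarrow> nat) \<Rightarrow> nat \<Rightarrow> nat \<Rightarrow> nat" where
  "col n A j = (\<lambda>i. if i < n then A i j else 0)"

definition columns :: "nat \<Rightarrow> nat \<Rightarrow> (nat \<Rightarrow> nat \<Rightarrow> nat) \<Rightarrow> (nat \<Rightarrow> nat) set" where
  "columns n m A = col n A ` {0..<m}"

definition binary_matrix :: "nat \<Rightarrow> nat \<Rightarrow> (nat \<Rightarrow> nat \<Rightarrow> nat) \<Rightarrow> bool" where
  "binary_matrix n m A \<longleftrightarrow> (\<forall>i<n. \<forall>j<m. A i j \<in> {0,1})"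

definition is_base ::
  "(nat \<Rightarrow> (nat \<Rightarrow> nat) set \<Rightarrow> (nat \<Rightarrow> nat) \<Rightarrow> bool) \<Rightarrow> nat \<Rightarrow> nat \<Rightarrow>
   (nat \<Rightarrow> nat \<Rightarrow> nat) \<Rightarrow> (nat \<Rightarrow> nat) set \<Rightarrow> bool" where
  "is_base sp n m A X \<longleftrightarrow>
     X \<subseteq> binvecs n \<and> spans_set sp n X (columns n m A) \<and>
     (\<forall>Y. Y \<subseteq> binvecs n \<and> spans_set sp n Y (columns n m A) \<longrightarrow> card X \<le> card Y)"

end

theory Submission
  imports Defs
begin

(* Let B1, B2 be bases spanning each other. If x is in B1 but not in B2, then x is spanned
   by vectors of B2 lying pointwise below x, hence of strictly smaller weight; by induction
   on the weight these lie in B1, so x is spanned by B1 - {x}. This contradicts the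
   minimality of B1: the vector x could be replaced by its spanning set in every
   representation of a column (in the binary setting the replacement is disjoint because
   the columns are {0,1}-vectors). *)

lemma finite_binvecs: "finite (binvecs n)"
proof -
  have "binvecs n = {f. \<forall>i. (i \<in> {..<n} \<longrightarrow> f i \<in> {0,1}) \<and> (i \<notin> {..<n} \<longrightarrow> f i = 0)}"
    by (auto simp: binvecs_def not_less)
  then show ?thesis using finite_set_of_finite_funs[of "{..<n}" "{0,1::nat}" 0] by simp
qed

lemma finite_subset_binvecs: "X \<subseteq> binvecs n \<Longrightarrow> finite X"
  using finite_binvecs finite_subset by blast

lemma is_base_subset_binvecs: "is_base sp n m A B \<Longrightarrow> B \<subseteq> binvecs n"
  by (simp add: is_base_def)

lemma sum_binvecs_strict_mono:
  assumes "c \<in> binvecs n" "x \<in> binvecs n" "\<forall>i<n. c i \<le> x i" "c \<noteq> x"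
  shows "(\<Sum>i<n. c i) < (\<Sum>i<n. x i)"
proof -
  obtain i where "c i \<noteq> x i" using \<open>c \<noteq> x\<close> by auto
  moreover have "i < n"
  proof (rule ccontr)
    assume "\<not> i < n"
    then have "c i = 0" "x i = 0" using assms(1,2) by (simp_all add: binvecs_def)
    with \<open>c i \<noteq> x i\<close> show False by simp
  qed
  ultimately have "\<exists>i\<in>{..<n}. c i < x i" using assms(3) by (auto simp: le_less)
  then show ?thesis using assms(3) by (intro sum_strict_mono_ex1) auto
qed

definition irredundant ::
  "(nat \<Rightarrow> (nat \<Rightarrow> nat) set \<Rightarrow> (nat \<Rightarrow> nat) \<Rightarrow> bool) \<Rightarrow> nat \<Rightarrow> (nat \<Rightarrow> nat) set \<Rightarrow> bool" where
  "irredundant sp n B \<longleftrightarrow> (\<forall>x\<in>B. \<not> sp n (B - {x}) x)"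

locale downward_span =
  fixes sp :: "nat \<Rightarrow> (nat \<Rightarrow> nat) set \<Rightarrow> (nat \<Rightarrow> nat) \<Rightarrow> bool"
  assumes spans_mono: "sp n X y \<Longrightarrow> X \<subseteq> Y \<Longrightarrow> sp n Y y"
    and spans_by_below: "sp n X y \<Longrightarrow> X \<subseteq> binvecs n \<Longrightarrow>
      \<exists>C\<subseteq>X. (\<forall>c\<in>C. \<forall>i<n. c i \<le> y i) \<and> sp n C y"
begin

lemma mem_if_spans_irredundant:
  assumes B1: "B1 \<subseteq> binvecs n" "irredundant sp n B1" and B2: "B2 \<subseteq> binvecs n"
    and spans: "spans_set sp n B2 B1" and x: "x \<in> B1"
    and smaller: "\<And>c. c \<in> B2 \<Longrightarrow> (\<Sum>i<n. c i) < (\<Sum>i<n. x i) \<Longrightarrow> c \<in> B1"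
  shows "x \<in> B2"
proof (rule ccontr)
  assume "x \<notin> B2"
  have "sp n B2 x" using spans x by (simp add: spans_set_def)
  then obtain C where C: "C \<subseteq> B2" "\<forall>c\<in>C. \<forall>i<n. c i \<le> x i" "sp n C x"
    using spans_by_below[OF _ B2] by blast
  have "C \<subseteq> B1 - {x}"
  proof
    fix c assume c: "c \<in> C"
    with C(1) \<open>x \<notin> B2\<close> have "c \<in> B2" "c \<noteq> x" by auto
    then have "(\<Sum>i<n. c i) < (\<Sum>i<n. x i)"
      using B1(1) B2 C(2) c x by (intro sum_binvecs_strict_mono) auto
    then show "c \<in> B1 - {x}" using smaller \<open>c \<in> B2\<close> \<open>c \<noteq> x\<close> by blast
  qed
  with C(3) have "sp n (B1 - {x}) x" by (rule spans_mono)
  with B1(2) x show False by (auto simp: irredundant_def)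
qed

lemma mutually_spanning_irredundant_eq:
  assumes B1: "B1 \<subseteq> binvecs n" "irredundant sp n B1"
    and B2: "B2 \<subseteq> binvecs n" "irredundant sp n B2"
    and "spans_set sp n B1 B2" "spans_set sp n B2 B1"
  shows "B1 = B2"
proof -
  have "x \<in> B1 \<longleftrightarrow> x \<in> B2" for x
  proof (induction "\<Sum>i<n. x i" arbitrary: x rule: less_induct)
    case less
    show ?case
      using mem_if_spans_irredundant[OF B1 B2(1) assms(6), of x]
        mem_if_spans_irredundant[OF B2 B1(1) assms(5), of x] less by blast
  qed
  then show ?thesis by blast
qed

lemma mutually_spanning_bases_eq:
  assumes irredundant: "\<And>B. is_base sp n m A B \<Longrightarrow> irredundant sp n B"
    and B1: "is_base sp n m A B1" and B2: "is_base sp n m A B2"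
    and "spans_set sp n B1 B2" "spans_set sp n B2 B1"
  shows "B1 = B2"
  using is_base_subset_binvecs[OF B1] irredundant[OF B1]
    is_base_subset_binvecs[OF B2] irredundant[OF B2] assms(4,5)
  by (rule mutually_spanning_irredundant_eq)

end

lemma bin_spans_vec_mono: "bin_spans_vec n X y \<Longrightarrow> X \<subseteq> Y \<Longrightarrow> bin_spans_vec n Y y"
  unfolding bin_spans_vec_def by blast

lemma bool_spans_vec_mono: "bool_spans_vec n X y \<Longrightarrow> X \<subseteq> Y \<Longrightarrow> bool_spans_vec n Y y"
  unfolding bool_spans_vec_def by blast

lemma bin_spans_vec_below:
  fixes C :: "(nat \<Rightarrow> nat) set"
  assumes "finite C" "\<forall>i<n. y i = (\<Sum>x\<in>C. x i)" "c \<in> C" "i < n"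
  shows "c i \<le> y i"
  using assms member_le_sum[of c C "\<lambda>x. x i"] by simp

interpretation bin: downward_span bin_spans_vec
proof
  fix n X y assume "bin_spans_vec n X y" "X \<subseteq> binvecs n"
  then obtain C where C: "C \<subseteq> X" "\<forall>i<n. y i = (\<Sum>x\<in>C. x i)"
    by (auto simp: bin_spans_vec_def)
  then have "finite C" using \<open>X \<subseteq> binvecs n\<close> finite_subset_binvecs by blast
  with C have "\<forall>c\<in>C. \<forall>i<n. c i \<le> y i" by (blast intro: bin_spans_vec_below)
  moreover have "bin_spans_vec n C y" using C(2) by (auto simp: bin_spans_vec_def)
  ultimately show "\<exists>C\<subseteq>X. (\<forall>c\<in>C. \<forall>i<n. c i \<le> y i) \<and> bin_spans_vec n C y"
    using C(1) by blast
qed (fact bin_spans_vec_mono)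

interpretation bool: downward_span bool_spans_vec
proof
  fix n X y assume "bool_spans_vec n X y" "X \<subseteq> binvecs n"
  then obtain C where C: "C \<subseteq> X" "\<forall>i<n. y i = (if \<exists>x\<in>C. x i = 1 then 1 else 0)"
    by (auto simp: bool_spans_vec_def)
  have "c i \<le> y i" if "c \<in> C" "i < n" for c i
  proof -
    have "c i \<in> {0,1}" using that C(1) \<open>X \<subseteq> binvecs n\<close> by (auto simp: binvecs_def)
    then show ?thesis using C(2) that by auto
  qed
  moreover have "bool_spans_vec n C y" using C(2) by (auto simp: bool_spans_vec_def)
  ultimately show "\<exists>C\<subseteq>X. (\<forall>c\<in>C. \<forall>i<n. c i \<le> y i) \<and> bool_spans_vec n C y"
    using C(1) by blast
qed (fact bool_spans_vec_mono)

lemma bool_spans_vec_insert_elim: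
  assumes x: "bool_spans_vec n X x" and y: "bool_spans_vec n (insert x X) y"
  shows "bool_spans_vec n X y"
proof -
  obtain C where C: "C \<subseteq> X" "\<forall>i<n. x i = (if \<exists>c\<in>C. c i = 1 then 1 else 0)"
    using x by (auto simp: bool_spans_vec_def)
  obtain D where D: "D \<subseteq> insert x X" "\<forall>i<n. y i = (if \<exists>d\<in>D. d i = 1 then 1 else 0)"
    using y by (auto simp: bool_spans_vec_def)
  show ?thesis
  proof (cases "x \<in> D")
    case False
    with D show ?thesis unfolding bool_spans_vec_def by blast
  next
    case True
    have "(\<exists>d\<in>D - {x} \<union> C. d i = 1) \<longleftrightarrow> (\<exists>d\<in>D. d i = 1)" if "i < n" for i
    proof -
      have "x i = 1 \<longleftrightarrow> (\<exists>c\<in>C. c i = 1)" using C(2) that by simp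
      then show ?thesis using True by blast
    qed
    then have "\<forall>i<n. y i = (if \<exists>d\<in>D - {x} \<union> C. d i = 1 then 1 else 0)"
      using D(2) by simp
    moreover have "D - {x} \<union> C \<subseteq> X" using C(1) D(1) by auto
    ultimately show ?thesis unfolding bool_spans_vec_def by blast
  qed
qed

lemma bin_spans_vec_insert_elim:
  assumes fin: "finite X" and x: "bin_spans_vec n X x" and y: "bin_spans_vec n (insert x X) y"
    and y_le_1: "\<forall>i<n. y i \<le> 1"
  shows "bin_spans_vec n X y"
proof -
  obtain C where C: "C \<subseteq> X" "\<forall>i<n. x i = (\<Sum>c\<in>C. c i)"
    using x by (auto simp: bin_spans_vec_def)
  obtain D where D: "D \<subseteq> insert x X" "\<forall>i<n. y i = (\<Sum>d\<in>D. d i)"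
    using y by (auto simp: bin_spans_vec_def)
  have finC: "finite C" and finD: "finite D"
    using C(1) D(1) fin by (auto intro: finite_subset)
  show ?thesis
  proof (cases "x \<in> D")
    case False
    with D show ?thesis unfolding bin_spans_vec_def by blast
  next
    case True
    let ?D = "D - {x}"
    have sum_D: "(\<Sum>d\<in>D. d i) = x i + (\<Sum>d\<in>?D. d i)" for i
      using True finD by (simp add: sum.remove)
    \<comment> \<open>a vector counted both in C and in D - {x} would make an entry of y exceed 1\<close>
    have overlap_zero: "e i = 0" if e: "e \<in> ?D \<inter> C" and i: "i < n" for e i
    proof -
      have "e i \<le> x i" using bin_spans_vec_below[OF finC C(2)] e i by blast
      moreover have "x i + e i \<le> y i"
      proof -
        have "e i \<le> (\<Sum>d\<in>?D. d i)" using e finD by (intro member_le_sum) auto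
        then show ?thesis using sum_D[of i] D(2) i by simp
      qed
      ultimately show ?thesis using y_le_1[rule_format, OF i] by linarith
    qed
    have "y i = (\<Sum>d\<in>?D \<union> C. d i)" if i: "i < n" for i
    proof -
      have "(\<Sum>d\<in>?D \<union> C. d i) + (\<Sum>d\<in>?D \<inter> C. d i) = (\<Sum>d\<in>?D. d i) + (\<Sum>d\<in>C. d i)"
        using finD finC by (intro sum.union_inter) auto
      moreover have "(\<Sum>d\<in>?D \<inter> C. d i) = 0" using overlap_zero i by (intro sum.neutral) blast
      ultimately show ?thesis using D(2) C(2) sum_D[of i] i by simp
    qed
    moreover have "?D \<union> C \<subseteq> X" using C(1) D(1) by auto
    ultimately show ?thesis unfolding bin_spans_vec_def by blast
  qed
qed

lemma is_base_irredundant: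
  assumes B: "is_base sp n m A B"
    and eliminate: "\<And>x y. x \<in> B \<Longrightarrow> sp n (B - {x}) x \<Longrightarrow> y \<in> columns n m A \<Longrightarrow>
      sp n (insert x (B - {x})) y \<Longrightarrow> sp n (B - {x}) y"
  shows "irredundant sp n B"
  unfolding irredundant_def
proof (intro ballI notI)
  fix x assume "x \<in> B" and x: "sp n (B - {x}) x"
  have "spans_set sp n (B - {x}) (columns n m A)"
    unfolding spans_set_def
  proof
    fix y assume "y \<in> columns n m A"
    moreover have "sp n (insert x (B - {x})) y"
      using B \<open>x \<in> B\<close> \<open>y \<in> columns n m A\<close> by (simp add: is_base_def spans_set_def insert_absorb)
    ultimately show "sp n (B - {x}) y" using eliminate \<open>x \<in> B\<close> x by blast
  qed
  moreover have "B - {x} \<subseteq> binvecs n" using is_base_subset_binvecs[OF B] by blast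
  ultimately have "card B \<le> card (B - {x})" using B by (simp add: is_base_def)
  moreover have "card (B - {x}) < card B"
    using finite_subset_binvecs[OF is_base_subset_binvecs[OF B]] \<open>x \<in> B\<close> by (rule card_Diff1_less)
  ultimately show False by simp
qed

lemma columns_le_one:
  assumes "binary_matrix n m A" "y \<in> columns n m A" "i < n"
  shows "y i \<le> 1"
proof -
  obtain j where "j < m" "y = col n A j" using assms(2) by (auto simp: columns_def)
  then have "y i = A i j" using assms(3) by (simp add: col_def)
  moreover have "A i j \<in> {0,1}" using assms(1,3) \<open>j < m\<close> by (simp add: binary_matrix_def)
  ultimately show ?thesis by auto
qed

lemma bool_base_irredundant:
  assumes "is_base bool_spans_vec n m A B"
  shows "irredundant bool_spans_vec n B"
  using assms by (rule is_base_irredundant) (rule bool_spans_vec_insert_elim)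

lemma bin_base_irredundant:
  assumes A: "binary_matrix n m A" and B: "is_base bin_spans_vec n m A B"
  shows "irredundant bin_spans_vec n B"
  using B
proof (rule is_base_irredundant)
  fix x y assume "y \<in> columns n m A" "bin_spans_vec n (B - {x}) x"
    "bin_spans_vec n (insert x (B - {x})) y"
  moreover have "finite (B - {x})"
    using finite_subset_binvecs[OF is_base_subset_binvecs[OF B]] by simp
  ultimately show "bin_spans_vec n (B - {x}) y"
    using columns_le_one[OF A] by (blast intro: bin_spans_vec_insert_elim)
qed

theorem mainTheorem15:
  fixes n m :: nat and A :: "nat \<Rightarrow> nat \<Rightarrow> nat"
  assumes "binary_matrix n m A"
  shows "(\<forall>B1 B2. is_base bin_spans_vec n m A B1 \<and> is_base bin_spans_vec n m A B2 \<and>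
            (\<forall>B. is_base bin_spans_vec n m A B \<longrightarrow> spans_set bin_spans_vec n B1 B) \<and>
            (\<forall>B. is_base bin_spans_vec n m A B \<longrightarrow> spans_set bin_spans_vec n B2 B)
            \<longrightarrow> B1 = B2)
       \<and> (\<forall>B1 B2. is_base bool_spans_vec n m A B1 \<and> is_base bool_spans_vec n m A B2 \<and>
            (\<forall>B. is_base bool_spans_vec n m A B \<longrightarrow> spans_set bool_spans_vec n B1 B) \<and>
            (\<forall>B. is_base bool_spans_vec n m A B \<longrightarrow> spans_set bool_spans_vec n B2 B)
            \<longrightarrow> B1 = B2)"
proof (intro conjI allI impI; elim conjE)
  fix B1 B2 :: "(nat \<Rightarrow> nat) set"
  assume "is_base bin_spans_vec n m A B1" "is_base bin_spans_vec n m A B2"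
    "\<forall>B. is_base bin_spans_vec n m A B \<longrightarrow> spans_set bin_spans_vec n B1 B"
    "\<forall>B. is_base bin_spans_vec n m A B \<longrightarrow> spans_set bin_spans_vec n B2 B"
  then show "B1 = B2"
    using bin.mutually_spanning_bases_eq[OF bin_base_irredundant[OF assms]] by blast
next
  fix B1 B2 :: "(nat \<Rightarrow> nat) set"
  assume "is_base bool_spans_vec n m A B1" "is_base bool_spans_vec n m A B2"
    "\<forall>B. is_base bool_spans_vec n m A B \<longrightarrow> spans_set bool_spans_vec n B1 B"
    "\<forall>B. is_base bool_spans_vec n m A B \<longrightarrow> spans_set bool_spans_vec n B2 B"
  then show "B1 = B2"
    using bool.mutually_spanning_bases_eq[OF bool_base_irredundant[of n m A]] by blast
qed

end
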